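(* Let $G$ be a (not necessarily strongly connected) directed network on node set $\mathcal{V}$, and let $G^o$ be the extended network. Let $F^{\{o\}}=(I-P_{\mathcal{V}\mathcal{V}})^{-1}$, where $P$ is the transition matrix of $G^o$. Then: (i) for all $s,t\in\mathcal{V}$, $F^{\{o\}}_{st}\neq 0$ if and only if $t$ is reachable from $s$ in $G$. (ii) Let $\mathcal{F}\subseteq\mathcal{V}$ be a nonempty set of failed nodes and $\mathcal{S}=\mathcal{F}\cup\{o\}$; then $F^{\{o\}}_{\mathcal{F}\mathcal{F}}$ is invertible, and for $s,t\in\mathcal{V}\setminus\mathcal{F}$ the quantity $$\boldsymbol{F}_{st\mathcal{S}}=F^{\{o\}}_{st}-F^{\{o\}}_{s\mathcal{F}}\big(F^{\{o\}}_{\mathcal{F}\mathcal{F}}\big)^{-1}F^{\{o\}}_{\mathcal{F}t}$$ is nonzero if and only if $t$ is reachable from $s$ in the network obtained from $G$ by deleting the nodes of $\mathcal{F}$.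
   Context: $G$ has a nonnegative affinity matrix $A$ ($a_{ij}>0$ iff there is an edge from $i$ to $j$). The extended network $G^o$ is obtained by adding a new node $o$ and an edge of positive weight from every node of $\mathcal{V}$ to $o$; the random walk on $G^o$ has transition matrix $P=D^{-1}A^o$ (row-normalized affinity of $G^o$), and $o$ is treated as the target (absorbing) node. $P_{\mathcal{V}\mathcal{V}}$ is the submatrix of $P$ on rows and columns $\mathcal{V}$, so $F^{\{o\}}_{st}$ is the expected number of visits to $t$ before hitting $o$ for the walk started at $s$. $F^{\{o\}}_{s\mathcal{F}}$, $F^{\{o\}}_{\mathcal{F}\mathcal{F}}$, $F^{\{o\}}_{\mathcal{F}t}$ denote the corresponding row vector, submatrix and column vector. A node $t$ is reachable from $s$ if there is a directed path from $s$ to $t$ (each node being reachable from itself). *)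

theory Defs
  imports "Jordan_Normal_Form.Matrix" "Jordan_Normal_Form.DL_Submatrix"
begin

text \<open>Nodes of G are 0..<n; A is the n x n nonnegative affinity matrix of G;
  w i > 0 is the weight of the edge from node i to the extra node o.
  trans_VV A w is the submatrix P_VV of the row-normalised transition matrix of G^o.\<close>

definition trans_VV :: "real mat \<Rightarrow> (nat \<Rightarrow> real) \<Rightarrow> real mat" where
  "trans_VV A w = mat (dim_row A) (dim_row A)
     (\<lambda>(i,j). A $$ (i,j) / ((\<Sum>k<dim_row A. A $$ (i,k)) + w i))"

definition edges :: "real mat \<Rightarrow> (nat \<times> nat) set" where
  "edges A = {(i,j). i < dim_row A \<and> j < dim_row A \<and> A $$ (i,j) > 0}"

definition reachable :: "real mat \<Rightarrow> nat \<Rightarrow> nat \<Rightarrow> bool" where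
  "reachable A s t \<longleftrightarrow> (s,t) \<in> (edges A)\<^sup>*"

definition reachable_del :: "real mat \<Rightarrow> nat set \<Rightarrow> nat \<Rightarrow> nat \<Rightarrow> bool" where
  "reachable_del A Fs s t \<longleftrightarrow> (s,t) \<in> {(i,j) \<in> edges A. i \<notin> Fs \<and> j \<notin> Fs}\<^sup>*"

definition is_inverse_mat :: "real mat \<Rightarrow> real mat \<Rightarrow> bool" where
  "is_inverse_mat X Y \<longleftrightarrow> Y \<in> carrier_mat (dim_row X) (dim_row X) \<and> X * Y = 1\<^sub>m (dim_row X) \<and> Y * X = 1\<^sub>m (dim_row X)"

end

theory Submission
  imports Defs "Jordan_Normal_Form.Determinant"
begin

(*
  Write p for the restriction P_VV of the transition matrix of G^o. Every node has an edge to o,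
  so all row sums of p are < 1 and a minimum principle holds: a solution of x = c + p x with
  c >= 0 is nonnegative, and a solution of x = p x vanishes. In particular I - p is invertible.

  Column t of F = (I - p)^-1 solves x = e_t + p x. Such a solution is positive on every node from
  which t is reachable, since positivity propagates backwards along edges; on the remaining
  nodes it solves the homogeneous system and so vanishes.

  For a set Fs of failed nodes, the Schur complement column y = F_.t - F_.Fs c with
  c = (F_FsFs)^-1 F_Fst vanishes on Fs and solves y = e_t + p y off Fs, so the same argument
  applies to the network with Fs deleted. Likewise a kernel vector u of F_FsFs gives the
  combination z = F_.Fs u, which vanishes on Fs and solves z = p z off Fs; hence z = 0, and
  u = (I - p) z restricted to Fs is 0.
*)

locale substochastic =
  fixes V :: "'a set" and P :: "'a \<Rightarrow> 'a \<Rightarrow> real"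
  assumes finite_V: "finite V"
    and nonneg: "\<And>i j. i \<in> V \<Longrightarrow> j \<in> V \<Longrightarrow> P i j \<ge> 0"
    and row_sum_less_one: "\<And>i. i \<in> V \<Longrightarrow> (\<Sum>j\<in>V. P i j) < 1"
begin

definition positive_edges :: "('a \<times> 'a) set" where
  "positive_edges = {(i,j). i \<in> V \<and> j \<in> V \<and> P i j > 0}"

lemma substochastic_subset:
  assumes "W \<subseteq> V"
  shows "substochastic W P"
proof
  show "finite W" using finite_V assms by (rule finite_subset[rotated])
  show "P i j \<ge> 0" if "i \<in> W" "j \<in> W" for i j using nonneg that assms by blast
  show "(\<Sum>j\<in>W. P i j) < 1" if "i \<in> W" for i
  proof -
    have "(\<Sum>j\<in>W. P i j) \<le> (\<Sum>j\<in>V. P i j)"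
      using finite_V nonneg that assms by (intro sum_mono2) auto
    with row_sum_less_one show ?thesis using that assms by force
  qed
qed

lemma solution_nonneg:
  assumes c: "\<And>i. i \<in> V \<Longrightarrow> c i \<ge> 0"
    and x: "\<And>i. i \<in> V \<Longrightarrow> x i = c i + (\<Sum>j\<in>V. P i j * x j)"
    and "i \<in> V"
  shows "x i \<ge> 0"
proof -
  define m where "m = Min (x ` V)"
  have m_le: "m \<le> x j" if "j \<in> V" for j unfolding m_def using finite_V that by simp
  have "m \<in> x ` V" unfolding m_def using finite_V \<open>i \<in> V\<close> by (intro Min_in) auto
  then obtain k where k: "k \<in> V" "x k = m" by auto
  have "m \<ge> 0"
  proof (rule ccontr)
    assume "\<not> m \<ge> 0"
    then have "m < (\<Sum>j\<in>V. P k j) * m"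
      using row_sum_less_one[OF k(1)] by (simp add: mult_less_cancel_right1)
    also have "\<dots> = (\<Sum>j\<in>V. P k j * m)" by (simp add: sum_distrib_right)
    also have "\<dots> \<le> (\<Sum>j\<in>V. P k j * x j)"
      using nonneg k m_le by (intro sum_mono mult_left_mono) auto
    also have "\<dots> \<le> x k" using x[OF k(1)] c[OF k(1)] by simp
    finally show False using k by simp
  qed
  with m_le \<open>i \<in> V\<close> show ?thesis by fastforce
qed

lemma homogeneous_solution_eq_0:
  assumes x: "\<And>i. i \<in> V \<Longrightarrow> x i = (\<Sum>j\<in>V. P i j * x j)"
    and "i \<in> V"
  shows "x i = 0"
proof -
  have "x i \<ge> 0" using solution_nonneg[of "\<lambda>_. 0" x] x \<open>i \<in> V\<close> by simp
  moreover have "- x i \<ge> 0"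
    using solution_nonneg[of "\<lambda>_. 0" "\<lambda>i. - x i"] x \<open>i \<in> V\<close> by (simp add: sum_negf)
  ultimately show ?thesis by simp
qed

lemma unit_solution_nonzero_iff:
  assumes t: "t \<in> V"
    and x: "\<And>i. i \<in> V \<Longrightarrow> x i = (if i = t then 1 else 0) + (\<Sum>j\<in>V. P i j * x j)"
    and s: "s \<in> V"
  shows "x s \<noteq> 0 \<longleftrightarrow> (s,t) \<in> positive_edges\<^sup>*"
proof
  have x_nonneg: "x i \<ge> 0" if "i \<in> V" for i
    using solution_nonneg[of "\<lambda>i. if i = t then 1 else 0" x] x that by simp
  have "x i > 0" if "(i,t) \<in> positive_edges\<^sup>*" "i \<in> V" for i
    using that
  proof (induction rule: converse_rtrancl_induct)
    case base
    have "(\<Sum>j\<in>V. P t j * x j) \<ge> 0" using nonneg x_nonneg t by (intro sum_nonneg) auto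
    then show ?case using x[OF t] by simp
  next
    case (step i k)
    then have ik: "i \<in> V" "k \<in> V" "P i k > 0" and "x k > 0" by (auto simp: positive_edges_def)
    then have "0 < P i k * x k" by simp
    also have "\<dots> \<le> (\<Sum>j\<in>V. P i j * x j)"
      using finite_V nonneg x_nonneg ik by (intro member_le_sum) auto
    also have "\<dots> \<le> x i" using x[OF ik(1)] by simp
    finally show ?case .
  qed
  then show "(s,t) \<in> positive_edges\<^sup>* \<Longrightarrow> x s \<noteq> 0" using s by fastforce
next
  define R where "R = {i \<in> V. (i,t) \<notin> positive_edges\<^sup>*}"
  have R: "R \<subseteq> V" "t \<notin> R" unfolding R_def by auto
  interpret R: substochastic R P by (rule substochastic_subset[OF R(1)])
  have "x i = (\<Sum>j\<in>R. P i j * x j)" if i: "i \<in> R" for i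
  proof -
    have "P i j = 0" if "j \<in> V - R" for j
    proof -
      have "(j,t) \<in> positive_edges\<^sup>*" using that unfolding R_def by blast
      then have "(i,j) \<notin> positive_edges" using i unfolding R_def by (blast intro: converse_rtrancl_into_rtrancl)
      then show ?thesis using nonneg[of i j] i that R(1) unfolding positive_edges_def by force
    qed
    then have "(\<Sum>j\<in>V. P i j * x j) = (\<Sum>j\<in>R. P i j * x j)"
      using finite_V R(1) by (intro sum.mono_neutral_right) auto
    then show ?thesis using x[of i] i R by auto
  qed
  then have "x i = 0" if "i \<in> R" for i using R.homogeneous_solution_eq_0 that by blast
  then show "x s \<noteq> 0 \<Longrightarrow> (s,t) \<in> positive_edges\<^sup>*" using s unfolding R_def by blast
qed

end

lemma index_mult_mat_sum:
  assumes "X \<in> carrier_mat a b" "Y \<in> carrier_mat b c" "i < a" "j < c"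
  shows "(X * Y) $$ (i,j) = (\<Sum>k<b. X $$ (i,k) * Y $$ (k,j))"
  using assms by (auto simp: scalar_prod_def atLeast0LessThan intro!: sum.cong)

lemma index_mult_mat_vec_sum:
  assumes "X \<in> carrier_mat a b" "v \<in> carrier_vec b" "i < a"
  shows "(X *\<^sub>v v) $ i = (\<Sum>k<b. X $$ (i,k) * v $ k)"
  using assms by (auto simp: scalar_prod_def atLeast0LessThan intro!: sum.cong)

lemma invertible_mat_if_kernel_trivial:
  fixes X :: "'a :: field mat"
  assumes X: "X \<in> carrier_mat m m"
    and ker: "\<And>v. v \<in> carrier_vec m \<Longrightarrow> X *\<^sub>v v = 0\<^sub>v m \<Longrightarrow> v = 0\<^sub>v m"
  shows "invertible_mat X"
proof -
  have "det X \<noteq> 0" using det_0_iff_vec_prod_zero_field[OF X] ker by blast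
  from det_non_zero_imp_unit[OF X this, of "()"]
  obtain Y where "Y \<in> carrier_mat m m" "Y * X = 1\<^sub>m m" "X * Y = 1\<^sub>m m"
    unfolding Units_def ring_mat_def by auto
  with X show ?thesis unfolding invertible_mat_def inverts_mat_def by auto
qed

lemma bij_betw_pick:
  assumes "finite S"
  shows "bij_betw (pick S) {..<card S} S"
proof (rule bij_betw_byWitness[where f' = "\<lambda>a. card {b \<in> S. b < a}"])
  show "pick S ` {..<card S} \<subseteq> S" using pick_in_set by auto
  show "(\<lambda>a. card {b \<in> S. b < a}) ` S \<subseteq> {..<card S}"
  proof
    fix k assume "k \<in> (\<lambda>a. card {b \<in> S. b < a}) ` S"
    then obtain a where "a \<in> S" "k = card {b \<in> S. b < a}" by blast
    moreover have "{b \<in> S. b < a} \<subset> S" using \<open>a \<in> S\<close> by auto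
    ultimately show "k \<in> {..<card S}" using assms by (simp add: psubset_card_mono)
  qed
qed (auto simp: card_pick pick_card_in_set)

lemma submatrix_carrier_index:
  assumes "X \<in> carrier_mat n k" "I \<subseteq> {..<n}" "J \<subseteq> {..<k}"
  shows "submatrix X I J \<in> carrier_mat (card I) (card J)"
    and "i < card I \<Longrightarrow> j < card J \<Longrightarrow> submatrix X I J $$ (i,j) = X $$ (pick I i, pick J j)"
proof -
  have "{i. i < dim_row X \<and> i \<in> I} = I" "{j. j < dim_col X \<and> j \<in> J} = J" using assms by auto
  then show "submatrix X I J \<in> carrier_mat (card I) (card J)"
    and "i < card I \<Longrightarrow> j < card J \<Longrightarrow> submatrix X I J $$ (i,j) = X $$ (pick I i, pick J j)"
    by (auto simp: dim_submatrix intro: submatrix_index)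
qed

locale extended_network =
  fixes A :: "real mat" and w :: "nat \<Rightarrow> real" and n :: nat
  assumes A_carrier: "A \<in> carrier_mat n n"
    and A_nonneg: "\<And>i j. i < n \<Longrightarrow> j < n \<Longrightarrow> A $$ (i,j) \<ge> 0"
    and w_pos: "\<And>i. i < n \<Longrightarrow> w i > 0"
begin

definition p :: "nat \<Rightarrow> nat \<Rightarrow> real" where
  "p i j = A $$ (i,j) / ((\<Sum>k<n. A $$ (i,k)) + w i)"

abbreviation I_minus_P :: "real mat" where
  "I_minus_P \<equiv> 1\<^sub>m n - trans_VV A w"

lemma degree_pos: "i < n \<Longrightarrow> (\<Sum>k<n. A $$ (i,k)) + w i > 0"
  using w_pos[of i] sum_nonneg[of "{..<n}" "\<lambda>k. A $$ (i,k)"] A_nonneg by force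

lemma trans_VV_carrier: "trans_VV A w \<in> carrier_mat n n"
  using A_carrier by (simp add: trans_VV_def)

lemma I_minus_P_carrier: "I_minus_P \<in> carrier_mat n n"
  by (rule minus_carrier_mat[OF trans_VV_carrier])

lemma index_I_minus_P: "i < n \<Longrightarrow> j < n \<Longrightarrow> I_minus_P $$ (i,j) = (if i = j then 1 else 0) - p i j"
  using A_carrier trans_VV_carrier by (simp add: trans_VV_def p_def)

lemma substochastic_p: "substochastic {..<n} p"
proof
  show "p i j \<ge> 0" if "i \<in> {..<n}" "j \<in> {..<n}" for i j
    using that A_nonneg degree_pos unfolding p_def by (simp add: divide_nonneg_pos)
  show "(\<Sum>j\<in>{..<n}. p i j) < 1" if "i \<in> {..<n}" for i
    using that degree_pos w_pos unfolding p_def sum_divide_distrib[symmetric] by simp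
qed simp

lemma p_pos_iff: "i < n \<Longrightarrow> p i j > 0 \<longleftrightarrow> A $$ (i,j) > 0"
  using degree_pos[of i] by (simp add: p_def zero_less_divide_iff)

lemma positive_edges_eq:
  "substochastic.positive_edges ({..<n} - Fs) p = {(i,j) \<in> edges A. i \<notin> Fs \<and> j \<notin> Fs}"
  using A_carrier p_pos_iff
  by (auto simp: substochastic.positive_edges_def[OF substochastic.substochastic_subset[OF substochastic_p]]
      edges_def)

lemma index_I_minus_P_mult_vec:
  assumes "v \<in> carrier_vec n" "i < n"
  shows "(I_minus_P *\<^sub>v v) $ i = v $ i - (\<Sum>j<n. p i j * v $ j)"
proof -
  have "(I_minus_P *\<^sub>v v) $ i = (\<Sum>j<n. ((if i = j then 1 else 0) - p i j) * v $ j)"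
    using assms by (simp add: index_mult_mat_vec_sum[OF I_minus_P_carrier] index_I_minus_P)
  also have "\<dots> = (\<Sum>j<n. (if i = j then v $ j else 0) - p i j * v $ j)"
    by (intro sum.cong) (auto simp: left_diff_distrib)
  also have "\<dots> = v $ i - (\<Sum>j<n. p i j * v $ j)"
    using assms(2) by (simp add: sum_subtractf)
  finally show ?thesis .
qed

lemma invertible_I_minus_P: "invertible_mat I_minus_P"
proof (rule invertible_mat_if_kernel_trivial)
  show "I_minus_P \<in> carrier_mat n n" by (rule I_minus_P_carrier)
  fix v :: "real vec" assume v: "v \<in> carrier_vec n" and "I_minus_P *\<^sub>v v = 0\<^sub>v n"
  then have "v $ i = (\<Sum>j\<in>{..<n}. p i j * v $ j)" if "i \<in> {..<n}" for i
    using index_I_minus_P_mult_vec[OF v, of i] that by (metis diff_eq_eq add_0 index_zero_vec(1) lessThan_iff)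
  then have "v $ i = 0" if "i < n" for i
    using substochastic.homogeneous_solution_eq_0[OF substochastic_p] that by blast
  with v show "v = 0\<^sub>v n" by (intro eq_vecI) auto
qed

lemma sum_p_restrict_complement:
  assumes "\<And>l. l \<in> Fs \<Longrightarrow> x l = 0"
  shows "(\<Sum>l<n. p k l * x l) = (\<Sum>l\<in>{..<n} - Fs. p k l * x l)"
  using assms by (intro sum.mono_neutral_right) auto

context
  fixes F :: "real mat"
  assumes F: "is_inverse_mat I_minus_P F"
begin

lemma F_carrier: "F \<in> carrier_mat n n"
  using F I_minus_P_carrier unfolding is_inverse_mat_def by auto

lemma column_eq:
  assumes "s < n" "t < n"
  shows "F $$ (s,t) = (if s = t then 1 else 0) + (\<Sum>k<n. p s k * F $$ (k,t))"
proof -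
  have "(if s = t then 1 else 0) = (I_minus_P * F) $$ (s,t)"
    using F I_minus_P_carrier assms unfolding is_inverse_mat_def by auto
  also have "\<dots> = (I_minus_P *\<^sub>v col F t) $ s"
    using I_minus_P_carrier F_carrier assms by (metis carrier_matD index_mult_mat(1) index_mult_mat_vec)
  also have "\<dots> = F $$ (s,t) - (\<Sum>k<n. p s k * F $$ (k,t))"
    using F_carrier assms by (simp add: index_I_minus_P_mult_vec)
  finally show ?thesis by simp
qed

lemma column_combination_eq:
  assumes "\<And>j. j \<in> J \<Longrightarrow> q j < n" "k < n"
  shows "(\<Sum>j\<in>J. F $$ (k, q j) * a j)
    = (\<Sum>j\<in>J. if k = q j then a j else 0) + (\<Sum>l<n. p k l * (\<Sum>j\<in>J. F $$ (l, q j) * a j))"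
proof -
  have "(\<Sum>j\<in>J. F $$ (k, q j) * a j)
      = (\<Sum>j\<in>J. (if k = q j then a j else 0) + (\<Sum>l<n. p k l * F $$ (l, q j)) * a j)"
    using assms column_eq by (intro sum.cong) (auto simp: distrib_right)
  also have "\<dots> = (\<Sum>j\<in>J. if k = q j then a j else 0) + (\<Sum>l<n. p k l * (\<Sum>j\<in>J. F $$ (l, q j) * a j))"
    by (simp add: sum.distrib sum_distrib_left sum_distrib_right mult.assoc sum.swap[of _ J])
  finally show ?thesis .
qed

lemma nonzero_iff_reachable:
  assumes "s < n" "t < n"
  shows "F $$ (s,t) \<noteq> 0 \<longleftrightarrow> reachable A s t"
proof -
  have "F $$ (s,t) \<noteq> 0 \<longleftrightarrow> (s,t) \<in> (substochastic.positive_edges ({..<n} - {}) p)\<^sup>*"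
    using substochastic.unit_solution_nonzero_iff[OF substochastic_p, of t "\<lambda>k. F $$ (k,t)" s]
      column_eq assms by auto
  then show ?thesis unfolding positive_edges_eq reachable_def by simp
qed

context
  fixes Fs :: "nat set"
  assumes Fs: "Fs \<subseteq> {..<n}"
begin

lemma bij_betw_pick_Fs: "bij_betw (pick Fs) {..<card Fs} Fs"
  using Fs by (intro bij_betw_pick) (rule finite_subset[OF _ finite_lessThan])

lemma pick_Fs_less: "i < card Fs \<Longrightarrow> pick Fs i < n"
  using bij_betw_pick_Fs Fs by (auto dest: bij_betw_apply)

lemma submatrix_Fs_Fs:
  "submatrix F Fs Fs \<in> carrier_mat (card Fs) (card Fs)"
  "i < card Fs \<Longrightarrow> j < card Fs \<Longrightarrow> submatrix F Fs Fs $$ (i,j) = F $$ (pick Fs i, pick Fs j)"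
  using submatrix_carrier_index[OF F_carrier Fs Fs] by auto

lemma invertible_submatrix: "invertible_mat (submatrix F Fs Fs)"
proof (rule invertible_mat_if_kernel_trivial[OF submatrix_Fs_Fs(1)])
  define m q where "m = card Fs" and "q = pick Fs"
  have q: "bij_betw q {..<m} Fs" "\<And>i. i < m \<Longrightarrow> q i < n"
    unfolding m_def q_def using bij_betw_pick_Fs pick_Fs_less by auto
  fix u :: "real vec"
  assume u: "u \<in> carrier_vec m" and ker: "submatrix F Fs Fs *\<^sub>v u = 0\<^sub>v m"
  define z where "z k = (\<Sum>i<m. F $$ (k, q i) * u $ i)" for k
  have z_eq: "z k = (\<Sum>i<m. if k = q i then u $ i else 0) + (\<Sum>l<n. p k l * z l)" if "k < n" for k
    unfolding z_def using q(2) that by (intro column_combination_eq) auto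
  have z_pick: "z (q i) = 0" if "i < m" for i
  proof -
    have "(submatrix F Fs Fs *\<^sub>v u) $ i = (\<Sum>j<m. submatrix F Fs Fs $$ (i,j) * u $ j)"
      using u that unfolding m_def by (rule index_mult_mat_vec_sum[OF submatrix_Fs_Fs(1)])
    also have "\<dots> = z (q i)"
      using that submatrix_Fs_Fs(2) unfolding z_def m_def q_def by simp
    finally show ?thesis using ker that by simp
  qed
  then have z_Fs: "z a = 0" if "a \<in> Fs" for a
    using q(1) that by (metis bij_betw_iff_bijections lessThan_iff)
  interpret W: substochastic "{..<n} - Fs" p
    by (rule substochastic.substochastic_subset[OF substochastic_p]) blast
  have "z k = 0" if "k \<in> {..<n} - Fs" for k
  proof (rule W.homogeneous_solution_eq_0[OF _ that])
    fix k assume k: "k \<in> {..<n} - Fs"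
    have "(\<Sum>i<m. if k = q i then u $ i else 0) = 0"
      using k q(1) by (intro sum.neutral) (auto dest: bij_betw_apply)
    then show "z k = (\<Sum>l\<in>{..<n} - Fs. p k l * z l)"
      using z_eq[of k] k sum_p_restrict_complement[OF z_Fs] by simp
  qed
  with z_Fs have z_0: "z k = 0" if "k < n" for k using that by blast
  show "u = 0\<^sub>v m"
  proof (rule eq_vecI)
    fix i assume "i < dim_vec (0\<^sub>v m)"
    then have i: "i < m" by simp
    have "(\<Sum>j<m. if q i = q j then u $ j else 0) = (\<Sum>j<m. if i = j then u $ j else 0)"
      using q(1) i by (intro sum.cong) (auto simp: bij_betw_def inj_on_def)
    then show "u $ i = 0\<^sub>v m $ i" using z_eq[OF q(2)[OF i]] z_0 q(2) i by simp
  qed (use u in simp)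
qed

lemma submatrix_row_col:
  assumes "s < n" "t < n"
  shows "submatrix F {s} Fs \<in> carrier_mat 1 (card Fs)"
    and "i < card Fs \<Longrightarrow> submatrix F {s} Fs $$ (0,i) = F $$ (s, pick Fs i)"
    and "submatrix F Fs {t} \<in> carrier_mat (card Fs) 1"
    and "i < card Fs \<Longrightarrow> submatrix F Fs {t} $$ (i,0) = F $$ (pick Fs i, t)"
  using submatrix_carrier_index[OF F_carrier _ Fs, of "{s}"] submatrix_carrier_index[OF F_carrier Fs, of "{t}"]
    assms by (auto simp: Least_equality)

lemma schur_complement_nonzero_iff_reachable_del:
  assumes B: "is_inverse_mat (submatrix F Fs Fs) B"
    and st: "s < n" "t < n" "s \<notin> Fs" "t \<notin> Fs"
  shows "(F $$ (s,t) - (submatrix F {s} Fs * B * submatrix F Fs {t}) $$ (0,0) \<noteq> 0)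
    \<longleftrightarrow> reachable_del A Fs s t"
proof -
  define m q where "m = card Fs" and "q = pick Fs"
  have q: "bij_betw q {..<m} Fs" "\<And>i. i < m \<Longrightarrow> q i < n"
    unfolding m_def q_def using bij_betw_pick_Fs pick_Fs_less by auto
  note FF = submatrix_Fs_Fs[folded m_def q_def]
  note row_col = submatrix_row_col[OF st(1,2), folded m_def q_def]
  have B': "B \<in> carrier_mat m m" "submatrix F Fs Fs * B = 1\<^sub>m m"
    using B FF(1) unfolding is_inverse_mat_def by auto
  define c where "c = B * submatrix F Fs {t}"
  have c: "c \<in> carrier_mat m 1" using B'(1) row_col(3) unfolding c_def by simp
  define y where "y k = F $$ (k,t) - (\<Sum>i<m. F $$ (k, q i) * c $$ (i,0))" for k
  have schur: "(submatrix F {s} Fs * B * submatrix F Fs {t}) $$ (0,0) = (\<Sum>i<m. F $$ (s, q i) * c $$ (i,0))"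
  proof -
    have "submatrix F {s} Fs * B * submatrix F Fs {t} = submatrix F {s} Fs * c"
      unfolding c_def by (rule assoc_mult_mat[OF row_col(1) B'(1) row_col(3)])
    then show ?thesis using index_mult_mat_sum[OF row_col(1) c] row_col(2) by simp
  qed
  have y_Fs: "y a = 0" if "a \<in> Fs" for a
  proof -
    obtain i where i: "i < m" "a = q i" using q(1) \<open>a \<in> Fs\<close> by (metis bij_betw_iff_bijections lessThan_iff)
    have "(\<Sum>j<m. F $$ (q i, q j) * c $$ (j,0)) = (submatrix F Fs Fs * c) $$ (i,0)"
      using index_mult_mat_sum[OF FF(1) c i(1)] FF(2) i(1) by simp
    also have "submatrix F Fs Fs * c = submatrix F Fs {t}"
      unfolding c_def using FF(1) B' row_col(3) by (simp flip: assoc_mult_mat)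
    finally show ?thesis using row_col(4) i unfolding y_def by simp
  qed
  have y_eq: "y k = (if k = t then 1 else 0) + (\<Sum>l<n. p k l * y l)" if k: "k < n" "k \<notin> Fs" for k
  proof -
    have "(\<Sum>i<m. if k = q i then c $$ (i,0) else 0) = 0"
      using k q(1) by (intro sum.neutral) (auto dest: bij_betw_apply)
    then show ?thesis
      using column_eq[OF k(1) st(2)] column_combination_eq[of "{..<m}" q k "\<lambda>i. c $$ (i,0)"] q(2) k(1)
      unfolding y_def by (simp add: right_diff_distrib sum_subtractf)
  qed
  interpret W: substochastic "{..<n} - Fs" p
    by (rule substochastic.substochastic_subset[OF substochastic_p]) blast
  have "y s \<noteq> 0 \<longleftrightarrow> (s,t) \<in> W.positive_edges\<^sup>*"
    using W.unit_solution_nonzero_iff[of t y s] y_eq sum_p_restrict_complement[OF y_Fs] st by auto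
  then show ?thesis unfolding schur y_def positive_edges_eq reachable_del_def by simp
qed

end

end

end

theorem mainTheorem18:
  fixes A :: "real mat" and w :: "nat \<Rightarrow> real" and n :: nat
  assumes "A \<in> carrier_mat n n"
    and "\<forall>i<n. \<forall>j<n. A $$ (i,j) \<ge> 0"
    and "\<forall>i<n. w i > 0"
  shows "invertible_mat (1\<^sub>m n - trans_VV A w) \<and>
    (\<forall>F. is_inverse_mat (1\<^sub>m n - trans_VV A w) F \<longrightarrow>
      (\<forall>s<n. \<forall>t<n. F $$ (s,t) \<noteq> 0 \<longleftrightarrow> reachable A s t) \<and>
      (\<forall>Fs. Fs \<subseteq> {..<n} \<and> Fs \<noteq> {} \<longrightarrow>
         invertible_mat (submatrix F Fs Fs) \<and>
         (\<forall>B. is_inverse_mat (submatrix F Fs Fs) B \<longrightarrow>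
           (\<forall>s<n. \<forall>t<n. s \<notin> Fs \<longrightarrow> t \<notin> Fs \<longrightarrow>
              ((F $$ (s,t) - (submatrix F {s} Fs * B * submatrix F Fs {t}) $$ (0,0) \<noteq> 0)
               \<longleftrightarrow> reachable_del A Fs s t)))))"
proof -
  interpret extended_network A w n using assms by unfold_locales auto
  show ?thesis
  proof (intro conjI allI impI invertible_I_minus_P)
    fix F Fs B s t
    assume F: "is_inverse_mat (1\<^sub>m n - trans_VV A w) F"
    show "F $$ (s,t) \<noteq> 0 \<longleftrightarrow> reachable A s t" if "s < n" "t < n"
      using nonzero_iff_reachable[OF F that] .
    assume "Fs \<subseteq> {..<n} \<and> Fs \<noteq> {}"
    then have Fs: "Fs \<subseteq> {..<n}" by blast
    show "invertible_mat (submatrix F Fs Fs)" using invertible_submatrix[OF F Fs] .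
    show "(F $$ (s,t) - (submatrix F {s} Fs * B * submatrix F Fs {t}) $$ (0,0) \<noteq> 0)
        \<longleftrightarrow> reachable_del A Fs s t"
      if "is_inverse_mat (submatrix F Fs Fs) B" "s < n" "t < n" "s \<notin> Fs" "t \<notin> Fs"
      using schur_complement_nonzero_iff_reachable_del[OF F Fs that] .
  qed
qed

end
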